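(* Let $p\ge37$ be a prime, $\kappa>0$ and $\xi=\lfloor\sqrt p\rfloor$. Then any set $\mathcal{S}\subseteq\mathbb{F}_p$ of size $\#\mathcal{S}\ge16p^{2\kappa}$ contains pairwise disjoint subsets $\mathcal{D}_k$, $k=1,\ldots,K$, and $\mathcal{E}_\ell$, $\ell=1,\ldots,L$, such that (i) $\#\mathcal{D}_k,\#\mathcal{E}_\ell\ge0.25p^{-\kappa}(\#\mathcal{S})^{1/2}$ for all $k,\ell$; (ii) each $\mathcal{D}_k$ is a $\sqrt p/3$-spaced set; (iii) each set $\xi\mathcal{E}_\ell=\{\xi a~:~a\in\mathcal{E}_\ell\}$ is a $\sqrt p/3$-spaced set; (iv) $\#\big(\mathcal{S}\setminus(\mathcal{S}_0\cup\mathcal{S}_1)\big)\le2p^{-\kappa}\#\mathcal{S}$, where $\mathcal{S}_0=\bigcup_{k=1}^K\mathcal{D}_k$ and $\mathcal{S}_1=\bigcup_{\ell=1}^L\mathcal{E}_\ell$.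
   Context: For $x\in\mathbb{F}_p$, $|x|$ denotes the minimum of the absolute values of the integers in the residue class of $x$ modulo $p$. A set $\mathcal{D}\subseteq\mathbb{F}_p$ is $\Delta$-spaced if $|d_1-d_2|\ge\Delta$ for any two distinct $d_1,d_2\in\mathcal{D}$. *)

theory Defs
  imports Complex_Main "HOL-Computational_Algebra.Primes"
begin

text \<open>Elements of F_p are represented by their canonical integer representatives
  in {0..<p}.  For x in F_p, |x|_p is the minimal absolute value of an integer
  in the residue class of x modulo p.\<close>

definition absp :: "int \<Rightarrow> int \<Rightarrow> int" where
  "absp p x = min (x mod p) (p - x mod p)"

definition spaced :: "int \<Rightarrow> real \<Rightarrow> int set \<Rightarrow> bool" where
  "spaced p \<Delta> D \<longleftrightarrow> (\<forall>d1\<in>D. \<forall>d2\<in>D. d1 \<noteq> d2 \<longrightarrow> real_of_int (absp p (d1 - d2)) \<ge> \<Delta>)"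

definition dilate :: "int \<Rightarrow> int \<Rightarrow> int set \<Rightarrow> int set" where
  "dilate p c E = (\<lambda>a. (c * a) mod p) ` E"

end

theory Submission
  imports Defs "HOL-Library.Disjoint_Sets"
begin

text \<open>
  Let c = p^(-\<kappa>) sqrt(#S) / 4 and \<xi> = floor(sqrt p). Greedily remove from S disjoint
  (sqrt p / 3)-spaced subsets of size at least c (the D_k), then disjoint subsets of size at
  least c whose \<xi>-dilate is (sqrt p / 3)-spaced (the E_l), until the remainder R contains no such
  set. A maximal spaced A \<subseteq> R and a maximal B \<subseteq> R with \<xi>B spaced then have fewer than c
  elements, every x in R is within sqrt p / 3 of some a in A, and \<xi>x is within sqrt p / 3 of
  some \<xi>b with b in B. The pair (a, b) determines x, because for 0 < e < 2 sqrt p / 3 the integer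
  \<xi>e lies between 2 sqrt p / 3 and p - 2 sqrt p / 3, so no nonzero residue e has both |e| and
  |\<xi>e| below 2 sqrt p / 3. Hence #R \<le> c^2 \<le> 2 p^(-\<kappa>) #S.
\<close>

lemma greedy_extraction:
  fixes P :: "'a set \<Rightarrow> bool" and c :: real
  assumes "finite T" "c > 0"
  shows "\<exists>(K::nat) D. (\<forall>k\<in>{1..K}. D k \<subseteq> T \<and> c \<le> card (D k) \<and> P (D k)) \<and>
    disjoint_family_on D {1..K} \<and> (\<forall>Y \<subseteq> T - (\<Union>k\<in>{1..K}. D k). P Y \<longrightarrow> card Y < c)"
  using assms(1)
proof (induction "card T" arbitrary: T rule: less_induct)
  case less
  show ?case
  proof (cases "\<exists>X\<subseteq>T. P X \<and> c \<le> card X")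
    case False
    then show ?thesis
      by (intro exI[of _ 0]) (auto simp: not_le disjoint_family_on_def)
  next
    case True
    then obtain X where X: "X \<subseteq> T" "P X" "c \<le> card X"
      by blast
    with assms(2) have "X \<noteq> {}"
      by auto
    with X(1) less.prems have "card (T - X) < card T"
      by (intro psubset_card_mono) auto
    obtain K :: nat and D where
      D: "\<forall>k\<in>{1..K}. D k \<subseteq> T - X \<and> c \<le> card (D k) \<and> P (D k)" and
      disj: "disjoint_family_on D {1..K}" and
      rest: "\<forall>Y \<subseteq> T - X - (\<Union>k\<in>{1..K}. D k). P Y \<longrightarrow> card Y < c"
      using less.hyps[OF \<open>card (T - X) < card T\<close> finite_Diff[OF less.prems]]
      by (elim exE conjE) (rule that)
    define D' where "D' = D(Suc K := X)"
    have "\<forall>k\<in>{1..Suc K}. D' k \<subseteq> T \<and> c \<le> card (D' k) \<and> P (D' k)"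
      using D X by (auto simp: D'_def atLeastAtMostSuc_conv)
    moreover have "disjoint_family_on D' {1..Suc K}"
      using disj D by (fastforce simp: D'_def disjoint_family_on_def atLeastAtMostSuc_conv)
    moreover have "T - (\<Union>k\<in>{1..Suc K}. D' k) = T - X - (\<Union>k\<in>{1..K}. D k)"
      by (auto simp: D'_def atLeastAtMostSuc_conv)
    ultimately show ?thesis
      using rest by (intro exI[of _ "Suc K"] exI[of _ D']) simp
  qed
qed

lemma greedy_extraction_pair:
  fixes P Q :: "'a set \<Rightarrow> bool" and c :: real
  assumes "finite T" "c > 0"
  obtains K L :: nat and D E where
    "\<forall>k\<in>{1..K}. D k \<subseteq> T \<and> c \<le> card (D k) \<and> P (D k)"
    "\<forall>l\<in>{1..L}. E l \<subseteq> T \<and> c \<le> card (E l) \<and> Q (E l)"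
    "disjoint_family_on D {1..K}" "disjoint_family_on E {1..L}"
    "\<forall>k\<in>{1..K}. \<forall>l\<in>{1..L}. D k \<inter> E l = {}"
    "\<forall>X \<subseteq> T - ((\<Union>k\<in>{1..K}. D k) \<union> (\<Union>l\<in>{1..L}. E l)). P X \<longrightarrow> card X < c"
    "\<forall>X \<subseteq> T - ((\<Union>k\<in>{1..K}. D k) \<union> (\<Union>l\<in>{1..L}. E l)). Q X \<longrightarrow> card X < c"
proof -
  obtain K :: nat and D where D: "\<forall>k\<in>{1..K}. D k \<subseteq> T \<and> c \<le> card (D k) \<and> P (D k)"
    "disjoint_family_on D {1..K}" "\<forall>Y \<subseteq> T - (\<Union>k\<in>{1..K}. D k). P Y \<longrightarrow> card Y < c"
    using greedy_extraction[OF assms, of P] by (elim exE conjE) (rule that)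
  obtain L :: nat and E where
    E: "\<forall>l\<in>{1..L}. E l \<subseteq> T - (\<Union>k\<in>{1..K}. D k) \<and> c \<le> card (E l) \<and> Q (E l)"
      "disjoint_family_on E {1..L}"
      "\<forall>Y \<subseteq> T - (\<Union>k\<in>{1..K}. D k) - (\<Union>l\<in>{1..L}. E l). Q Y \<longrightarrow> card Y < c"
    using greedy_extraction[OF finite_Diff[OF assms(1)] assms(2), of "\<Union>k\<in>{1..K}. D k" Q]
    by (elim exE conjE) (rule that)
  have rest: "T - ((\<Union>k\<in>{1..K}. D k) \<union> (\<Union>l\<in>{1..L}. E l)) =
      T - (\<Union>k\<in>{1..K}. D k) - (\<Union>l\<in>{1..L}. E l)"
    by blast
  show thesis
  proof (rule that[OF D(1) _ D(2) E(2)])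
    show "\<forall>l\<in>{1..L}. E l \<subseteq> T \<and> c \<le> card (E l) \<and> Q (E l)"
      using E(1) by blast
    show "\<forall>k\<in>{1..K}. \<forall>l\<in>{1..L}. D k \<inter> E l = {}"
      using E(1) by fastforce
    show "\<forall>X \<subseteq> T - ((\<Union>k\<in>{1..K}. D k) \<union> (\<Union>l\<in>{1..L}. E l)). P X \<longrightarrow> card X < c"
      unfolding rest using D(3) by (meson Diff_subset subset_trans)
    show "\<forall>X \<subseteq> T - ((\<Union>k\<in>{1..K}. D k) \<union> (\<Union>l\<in>{1..L}. E l)). Q X \<longrightarrow> card X < c"
      unfolding rest by (fact E(3))
  qed
qed

lemma absp_cong: "a mod p = b mod p \<Longrightarrow> absp p a = absp p b"
  by (simp add: absp_def)

lemma absp_zero: "p \<ge> 0 \<Longrightarrow> absp p 0 = 0"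
  by (simp add: absp_def)

lemma absp_minus: "(p::int) > 0 \<Longrightarrow> absp p (- a) = absp p a"
  by (auto simp: absp_def zmod_zminus1_eq_if)

lemma absp_commute: "(p::int) > 0 \<Longrightarrow> absp p (a - b) = absp p (b - a)"
  using absp_minus[of p "b - a"] by simp

lemma absp_le_abs:
  fixes p a :: int
  assumes "p > 0"
  shows "absp p a \<le> \<bar>a\<bar>"
proof -
  have nonneg: "absp p b \<le> b" if "b \<ge> 0" for b
    using that assms zmod_le_nonneg_dividend[of b p] by (simp add: absp_def)
  show ?thesis
    using nonneg[of a] nonneg[of "- a"] absp_minus[OF assms, of a] by (cases "a \<ge> 0") auto
qed

lemma absp_attained:
  fixes p a :: int
  assumes "p > 0"
  obtains r where "r mod p = a mod p" "\<bar>r\<bar> = absp p a"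
proof (cases "a mod p \<le> p - a mod p")
  case True
  then show ?thesis
    using assms that[of "a mod p"] by (simp add: absp_def)
next
  case False
  have "(a mod p - p) mod p = a mod p"
    by (simp add: mod_diff_right_eq[symmetric])
  moreover have "\<bar>a mod p - p\<bar> = absp p a"
    using False pos_mod_bound[OF assms, of a] by (simp add: absp_def abs_of_neg)
  ultimately show ?thesis
    by (rule that)
qed

lemma absp_add_le:
  fixes p :: int
  assumes "p > 0"
  shows "absp p (a + b) \<le> absp p a + absp p b"
proof -
  obtain r t where "r mod p = a mod p" "\<bar>r\<bar> = absp p a" "t mod p = b mod p" "\<bar>t\<bar> = absp p b"
    using absp_attained[OF assms] by metis
  then have "absp p (a + b) = absp p (r + t)"
    by (intro absp_cong mod_add_cong) simp_all
  also have "\<dots> \<le> \<bar>r + t\<bar>"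
    using absp_le_abs[OF assms] .
  finally show ?thesis
    using \<open>\<bar>r\<bar> = absp p a\<close> \<open>\<bar>t\<bar> = absp p b\<close> by linarith
qed

lemma absp_diff_le:
  fixes p :: int
  assumes "p > 0"
  shows "absp p (x - y) \<le> absp p (x - z) + absp p (y - z)"
  using absp_add_le[OF assms, of "x - z" "z - y"] absp_commute[OF assms, of y z] by simp

lemma spaced_insert:
  fixes p :: int
  assumes "p > 0"
  shows "spaced p s (insert d D) \<longleftrightarrow>
    spaced p s D \<and> (\<forall>e\<in>D. e \<noteq> d \<longrightarrow> s \<le> real_of_int (absp p (d - e)))"
  using absp_commute[OF assms] unfolding spaced_def by auto

lemma spaced_net_exists:
  fixes g :: "'a \<Rightarrow> int" and p :: int
  assumes "finite R" "p > 0" "s > 0"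
  shows "\<exists>A\<subseteq>R. spaced p s (g ` A) \<and> (\<forall>x\<in>R. \<exists>a\<in>A. real_of_int (absp p (g x - g a)) < s)"
  using assms(1)
proof (induction R rule: finite_induct)
  case empty
  show ?case
    by (simp add: spaced_def)
next
  case (insert x R)
  then obtain A where A: "A \<subseteq> R" "spaced p s (g ` A)"
    "\<forall>y\<in>R. \<exists>a\<in>A. real_of_int (absp p (g y - g a)) < s"
    by blast
  show ?case
  proof (cases "\<exists>a\<in>A. real_of_int (absp p (g x - g a)) < s")
    case True
    with A show ?thesis
      by (intro exI[of _ A]) auto
  next
    case False
    then have "spaced p s (g ` insert x A)"
      using A(2) spaced_insert[OF assms(2)] by (auto simp: not_less)
    moreover have "real_of_int (absp p (g x - g x)) < s"
      using absp_zero[of p] assms(2,3) by simp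
    ultimately show ?thesis
      using A by (intro exI[of _ "insert x A"]) auto
  qed
qed

lemma card_le_mult_by_two_nets:
  assumes "finite A" "finite B"
    and "\<forall>x\<in>R. \<exists>a\<in>A. P x a" "\<forall>x\<in>R. \<exists>b\<in>B. Q x b"
    and "\<And>x y a b. x \<in> R \<Longrightarrow> y \<in> R \<Longrightarrow> P x a \<Longrightarrow> P y a \<Longrightarrow> Q x b \<Longrightarrow> Q y b \<Longrightarrow> x = y"
  shows "card R \<le> card A * card B"
proof -
  obtain \<alpha> \<beta> where \<alpha>: "\<forall>x\<in>R. \<alpha> x \<in> A \<and> P x (\<alpha> x)" and \<beta>: "\<forall>x\<in>R. \<beta> x \<in> B \<and> Q x (\<beta> x)"
    using assms(3,4) by metis
  have "inj_on (\<lambda>x. (\<alpha> x, \<beta> x)) R"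
  proof (rule inj_onI)
    fix x y
    assume xy: "x \<in> R" "y \<in> R" and "(\<alpha> x, \<beta> x) = (\<alpha> y, \<beta> y)"
    then have "P x (\<alpha> x)" "P y (\<alpha> x)" "Q x (\<beta> x)" "Q y (\<beta> x)"
      using \<alpha> \<beta> by auto
    then show "x = y"
      by (rule assms(5)[OF xy])
  qed
  moreover have "(\<lambda>x. (\<alpha> x, \<beta> x)) ` R \<subseteq> A \<times> B"
    using \<alpha> \<beta> by auto
  ultimately have "card R \<le> card (A \<times> B)"
    using assms(1,2) by (intro card_inj_on_le) auto
  then show ?thesis
    by (simp add: card_cartesian_product)
qed

lemma absp_floor_sqrt_mult_ge:
  fixes p :: nat and e :: int
  assumes "p \<ge> 9" "0 < e" "real_of_int e < 2 * sqrt p / 3"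
  shows "2 * sqrt p / 3 \<le> real_of_int (absp (int p) (int (nat \<lfloor>sqrt p\<rfloor>) * e))"
proof -
  define r where "r = sqrt p"
  define \<xi> where "\<xi> = \<lfloor>r\<rfloor>"
  have r3: "3 \<le> r"
    unfolding r_def using assms(1) by (intro real_le_rsqrt) simp
  have p_eq: "real p = r * r"
    unfolding r_def by simp
  have \<xi>_eq: "int (nat \<lfloor>sqrt p\<rfloor>) = \<xi>"
    unfolding \<xi>_def r_def by simp
  have \<xi>_bounds: "2 * r / 3 \<le> \<xi>" "\<xi> \<le> r"
    unfolding \<xi>_def using r3 real_of_int_floor_gt_diff_one[of r] by linarith+
  have "\<xi> \<le> \<xi> * e"
    using \<xi>_bounds(1) r3 assms(2) by (simp add: mult_le_cancel_left1)
  then have lo: "2 * r / 3 \<le> real_of_int (\<xi> * e)"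
    using \<xi>_bounds(1) by linarith
  have "real_of_int (\<xi> * e) \<le> r * e"
    using \<xi>_bounds(2) assms(2) by (simp add: mult_right_mono)
  also have "\<dots> < r * (2 * r / 3)"
    using assms(3) r3 unfolding r_def[symmetric] by (intro mult_strict_left_mono) auto
  finally have hi: "real_of_int (\<xi> * e) < 2 * real p / 3"
    using p_eq by simp
  have "(\<xi> * e) mod int p = \<xi> * e"
    using lo hi r3 by (intro mod_pos_pos_trivial) linarith+
  then have "absp (int p) (\<xi> * e) = min (\<xi> * e) (int p - \<xi> * e)"
    by (simp add: absp_def)
  moreover have "2 * r / 3 \<le> real p - real_of_int (\<xi> * e)"
    using hi p_eq r3 mult_right_mono[of 3 r r] by linarith
  ultimately show ?thesis
    using lo unfolding \<xi>_eq r_def by (simp add: min_def)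
qed

lemma absp_or_absp_floor_sqrt_mult_ge:
  fixes p :: nat and z :: int
  assumes "p \<ge> 9" "z mod int p \<noteq> 0"
  defines "\<xi> \<equiv> int (nat \<lfloor>sqrt p\<rfloor>)"
  shows "2 * sqrt p / 3 \<le> real_of_int (absp (int p) z) \<or>
    2 * sqrt p / 3 \<le> real_of_int (absp (int p) (\<xi> * z))"
proof (rule ccontr)
  define t where "t = 2 * sqrt p / 3"
  define d where "d = z mod int p"
  assume "\<not> ?thesis"
  then have small: "real_of_int (absp (int p) z) < t" "real_of_int (absp (int p) (\<xi> * z)) < t"
    unfolding t_def by auto
  have p_pos: "int p > 0"
    using assms(1) by simp
  have d: "0 < d" "d < int p"
    using assms(2) pos_mod_sign[OF p_pos, of z] pos_mod_bound[OF p_pos, of z] unfolding d_def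
    by linarith+
  have "absp (int p) z = min d (int p - d)"
    unfolding absp_def d_def ..
  then consider "real_of_int d < t" | "real_of_int (int p - d) < t"
    using small(1) by linarith
  then show False
  proof cases
    case 1
    have "absp (int p) (\<xi> * d) = absp (int p) (\<xi> * z)"
      unfolding d_def by (intro absp_cong) (simp add: mod_mult_right_eq)
    then show False
      using absp_floor_sqrt_mult_ge[OF assms(1) d(1) 1[unfolded t_def]] small(2)
      unfolding t_def \<xi>_def by simp
  next
    case 2
    have "\<xi> * (int p - d) = - (\<xi> * z) + int p * (\<xi> * (z div int p + 1))"
      unfolding d_def minus_div_mult_eq_mod[symmetric] by (simp add: algebra_simps)
    then have "absp (int p) (\<xi> * (int p - d)) = absp (int p) (- (\<xi> * z))"
      by (metis absp_cong mod_mult_self2)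
    also have "\<dots> = absp (int p) (\<xi> * z)"
      using d by (simp add: absp_minus)
    finally show False
      using absp_floor_sqrt_mult_ge[OF assms(1) _ 2[unfolded t_def]] d small(2)
      unfolding t_def \<xi>_def by simp
  qed
qed

lemma card_le_sq_if_no_large_spaced_subset:
  fixes p :: nat and R :: "int set" and c :: real
  assumes "p \<ge> 9" "R \<subseteq> {0..<int p}"
    and "\<forall>X \<subseteq> R. spaced p (sqrt p / 3) X \<longrightarrow> card X < c"
    and "\<forall>X \<subseteq> R. spaced p (sqrt p / 3) (dilate p (int (nat \<lfloor>sqrt p\<rfloor>)) X) \<longrightarrow> card X < c"
  shows "card R \<le> c\<^sup>2"
proof -
  define s where "s = sqrt p / 3"
  define \<xi> where "\<xi> = int (nat \<lfloor>sqrt p\<rfloor>)"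
  define f where "f a = (\<xi> * a) mod int p" for a
  have p: "int p > 0" and s: "s > 0"
    using assms(1) by (simp_all add: s_def)
  have R: "finite R"
    using assms(2) finite_subset by blast
  obtain A where A: "A \<subseteq> R" "spaced p s A" "\<forall>x\<in>R. \<exists>a\<in>A. real_of_int (absp p (x - a)) < s"
    using spaced_net_exists[OF R p s, of "\<lambda>x. x"] by auto
  obtain B where B: "B \<subseteq> R" "spaced p s (f ` B)"
    "\<forall>x\<in>R. \<exists>b\<in>B. real_of_int (absp p (f x - f b)) < s"
    using spaced_net_exists[OF R p s, of f] by auto
  have "card A < c" "card B < c"
    using assms(3,4) A(1,2) B(1,2) by (auto simp: s_def \<xi>_def f_def dilate_def)
  have "card R \<le> card A * card B"
  proof (rule card_le_mult_by_two_nets[OF _ _ A(3) B(3)])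
    show "finite A" "finite B"
      using A(1) B(1) R finite_subset by blast+
  next
    fix x y a b
    assume xy: "x \<in> R" "y \<in> R"
      and a: "real_of_int (absp p (x - a)) < s" "real_of_int (absp p (y - a)) < s"
      and b: "real_of_int (absp p (f x - f b)) < s" "real_of_int (absp p (f y - f b)) < s"
    show "x = y"
    proof (rule ccontr)
      assume "x \<noteq> y"
      moreover have "x \<in> {0..<int p}" "y \<in> {0..<int p}"
        using xy assms(2) by auto
      then have "\<bar>x - y\<bar> < int p"
        by auto
      ultimately have "(x - y) mod int p \<noteq> 0"
        using dvd_imp_le_int[of "x - y" "int p"] by (auto simp: mod_eq_0_iff_dvd)
      have "real_of_int (absp p (x - y)) < 2 * sqrt p / 3"
        using absp_diff_le[OF p, of x y a] a s_def by linarith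
      moreover have "absp p (\<xi> * (x - y)) = absp p (f x - f y)"
        unfolding f_def by (intro absp_cong) (simp add: mod_diff_eq right_diff_distrib)
      then have "real_of_int (absp p (\<xi> * (x - y))) < 2 * sqrt p / 3"
        using absp_diff_le[OF p, of "f x" "f y" "f b"] b s_def by linarith
      ultimately show False
        using absp_or_absp_floor_sqrt_mult_ge[OF assms(1) \<open>(x - y) mod int p \<noteq> 0\<close>]
        unfolding \<xi>_def by linarith
    qed
  qed
  then have "real (card R) \<le> real (card A) * real (card B)"
    by (metis of_nat_le_iff of_nat_mult)
  also have "\<dots> \<le> c\<^sup>2"
    using \<open>card A < c\<close> \<open>card B < c\<close> by (simp add: power2_eq_square mult_mono)
  finally show ?thesis .
qed

lemma quarter_powr_sqrt_sq_le:
  fixes x \<kappa> n :: real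
  assumes "1 \<le> x" "0 \<le> \<kappa>" "0 \<le> n"
  shows "(0.25 * x powr - \<kappa> * sqrt n)\<^sup>2 \<le> 2 * x powr - \<kappa> * n"
proof -
  have "(0.25 * x powr - \<kappa> * sqrt n)\<^sup>2 = x powr - \<kappa> * x powr - \<kappa> * n / 16"
    using assms(3) by (simp add: power2_eq_square algebra_simps)
  also have "\<dots> \<le> 1 * x powr - \<kappa> * n / 16"
    using assms powr_mono[of "- \<kappa>" 0 x] by (intro divide_right_mono mult_right_mono) auto
  also have "\<dots> \<le> 2 * x powr - \<kappa> * n"
    using assms(3) by simp
  finally show ?thesis .
qed

theorem lemma2p15:
  fixes p :: nat and \<kappa> :: real and S :: "int set"
  assumes "prime p" and "p \<ge> 37" and "\<kappa> > 0"
    and "S \<subseteq> {0..<int p}"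
    and "real (card S) \<ge> 16 * real p powr (2 * \<kappa>)"
  shows "\<exists>(K::nat) (L::nat) (D::nat \<Rightarrow> int set) (E::nat \<Rightarrow> int set).
     (\<forall>k\<in>{1..K}. D k \<subseteq> S) \<and> (\<forall>l\<in>{1..L}. E l \<subseteq> S) \<and>
     (\<forall>k\<in>{1..K}. \<forall>k'\<in>{1..K}. k \<noteq> k' \<longrightarrow> D k \<inter> D k' = {}) \<and>
     (\<forall>l\<in>{1..L}. \<forall>l'\<in>{1..L}. l \<noteq> l' \<longrightarrow> E l \<inter> E l' = {}) \<and>
     (\<forall>k\<in>{1..K}. \<forall>l\<in>{1..L}. D k \<inter> E l = {}) \<and>
     (\<forall>k\<in>{1..K}. real (card (D k)) \<ge> 0.25 * real p powr (-\<kappa>) * sqrt (real (card S))) \<and>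
     (\<forall>l\<in>{1..L}. real (card (E l)) \<ge> 0.25 * real p powr (-\<kappa>) * sqrt (real (card S))) \<and>
     (\<forall>k\<in>{1..K}. spaced (int p) (sqrt (real p) / 3) (D k)) \<and>
     (\<forall>l\<in>{1..L}. spaced (int p) (sqrt (real p) / 3)
                    (dilate (int p) (int (nat \<lfloor>sqrt (real p)\<rfloor>)) (E l))) \<and>
     real (card (S - ((\<Union>k\<in>{1..K}. D k) \<union> (\<Union>l\<in>{1..L}. E l))))
        \<le> 2 * real p powr (-\<kappa>) * real (card S)"
proof -
  define c where "c = 0.25 * real p powr (-\<kappa>) * sqrt (real (card S))"
  have "p \<ge> 9"
    using assms(2) by simp
  have "finite S"
    using assms(4) finite_subset by blast
  have "card S > 0"
    using assms(2,5) powr_gt_zero[of "real p" "2 * \<kappa>"] by linarith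
  then have "c > 0"
    using assms(2) unfolding c_def by simp
  obtain K L :: nat and D E where
    D: "\<forall>k\<in>{1..K}. D k \<subseteq> S \<and> c \<le> card (D k) \<and> spaced p (sqrt p / 3) (D k)" and
    E: "\<forall>l\<in>{1..L}. E l \<subseteq> S \<and> c \<le> card (E l) \<and>
          spaced p (sqrt p / 3) (dilate p (int (nat \<lfloor>sqrt p\<rfloor>)) (E l))" and
    disj: "disjoint_family_on D {1..K}" "disjoint_family_on E {1..L}"
      "\<forall>k\<in>{1..K}. \<forall>l\<in>{1..L}. D k \<inter> E l = {}" and
    rest: "\<forall>X \<subseteq> S - ((\<Union>k\<in>{1..K}. D k) \<union> (\<Union>l\<in>{1..L}. E l)).
         spaced p (sqrt p / 3) X \<longrightarrow> card X < c"
      "\<forall>X \<subseteq> S - ((\<Union>k\<in>{1..K}. D k) \<union> (\<Union>l\<in>{1..L}. E l)).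
         spaced p (sqrt p / 3) (dilate p (int (nat \<lfloor>sqrt p\<rfloor>)) X) \<longrightarrow> card X < c"
    by (rule greedy_extraction_pair[OF \<open>finite S\<close> \<open>c > 0\<close>])
  have "card (S - ((\<Union>k\<in>{1..K}. D k) \<union> (\<Union>l\<in>{1..L}. E l))) \<le> c\<^sup>2"
    by (rule card_le_sq_if_no_large_spaced_subset[OF \<open>p \<ge> 9\<close> _ rest]) (use assms(4) in blast)
  also have "c\<^sup>2 \<le> 2 * real p powr (-\<kappa>) * real (card S)"
    unfolding c_def using assms(2,3) by (intro quarter_powr_sqrt_sq_le) auto
  finally have bound: "card (S - ((\<Union>k\<in>{1..K}. D k) \<union> (\<Union>l\<in>{1..L}. E l)))
      \<le> 2 * real p powr (-\<kappa>) * real (card S)" .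
  show ?thesis
    by (rule exI[of _ K], rule exI[of _ L], rule exI[of _ D], rule exI[of _ E])
      (use D[unfolded c_def] E[unfolded c_def] disj[unfolded disjoint_family_on_def] bound in blast)
qed

end
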